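(* Fix a positive integer $n$, a nonzero $n$-partition $\lambda$ with $\lambda_n=0$, an $n$-semistandard tableau $T$ of shape $\lambda$, a column $1\le l<\lambda_1$ and a location $(j,i)>(l,1)$ in reading order. Then the scanning path $P(T;l,k)$ ($1\le k\le c_l$) that contains $(j,i)$ is the one whose most recent value relative to $(j,i)$ is the largest among those most recent values (over $1\le k\le c_l$) that are less than or equal to $T(j,i)$.
   Context: Identify $\lambda=(\lambda_1,\dots,\lambda_n)$ (weakly decreasing nonnegative integers, $\lambda_n=0$, $\lambda\ne0$) with its Young diagram; $c_j$ is the length of column $j$; $(j,i)$ is the box in column $j$, row $i$. Reading order: $(l,k)\le(j,i)$ iff $l<j$, or $l=j$ and $k\ge i$. An $n$-semistandard tableau $T$ of shape $\lambda$ has entries in $[n]$, weakly increasing along rows, strictly increasing down columns; $T(j,i)$ is its entry. The EWIS of a sequence $x_1,x_2,\dots$ is $x_{a_1},x_{a_2},\dots$ with $a_1=1$ and $a_b$ the smallest index $>a_{b-1}$ with $x_{a_b}\ge x_{a_{b-1}}$. Scanning paths: for each column $l$ and $k=c_l,c_l-1,\dots,1$ in turn, delete the boxes of the previously computed $P(T;l,k')$, $k'>k$ (leaving a semistandard tableau of valid shape); form the sequence of entries in the lowest box of each of columns $l,\dots,\lambda_1$ of the current shape (skipping empty columns); $P(T;l,k)$ is the set of locations of the terms of its EWIS. Every location $(a,b)\ge(l,c_l)$ lies in exactly one $P(T;l,k)$. For $(j,i)>(l,1)$, the most recent location of $P(T;l,k)$ relative to $(j,i)$ is the latest location (in reading order)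 of $P(T;l,k)$ strictly before $(j,i)$, and the most recent value is the entry of $T$ there. *)

theory Defs
  imports Main
begin

text \<open>Partitions are functions lam :: nat => nat, meaningful on 1..n (lam i = lambda_i).
Boxes are pairs (j,i) = (column, row).\<close>

definition is_partition :: "nat \<Rightarrow> (nat \<Rightarrow> nat) \<Rightarrow> bool" where
  "is_partition n lam \<longleftrightarrow>
     (\<forall>i j. 1 \<le> i \<and> i \<le> j \<and> j \<le> n \<longrightarrow> lam j \<le> lam i) \<and>
     lam n = 0 \<and> (\<exists>i\<in>{1..n}. lam i \<noteq> 0)"

definition young :: "nat \<Rightarrow> (nat \<Rightarrow> nat) \<Rightarrow> (nat \<times> nat) set" where
  "young n lam = {(j, i). 1 \<le> i \<and> i \<le> n \<and> 1 \<le> j \<and> j \<le> lam i}"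

definition col_len :: "nat \<Rightarrow> (nat \<Rightarrow> nat) \<Rightarrow> nat \<Rightarrow> nat" where
  "col_len n lam j = card {i \<in> {1..n}. j \<le> lam i}"

definition semistandard :: "nat \<Rightarrow> (nat \<Rightarrow> nat) \<Rightarrow> (nat \<Rightarrow> nat \<Rightarrow> nat) \<Rightarrow> bool" where
  "semistandard n lam T \<longleftrightarrow>
     (\<forall>(j, i) \<in> young n lam. 1 \<le> T j i \<and> T j i \<le> n) \<and>
     (\<forall>j i. (j, i) \<in> young n lam \<and> (Suc j, i) \<in> young n lam \<longrightarrow> T j i \<le> T (Suc j) i) \<and>
     (\<forall>j i. (j, i) \<in> young n lam \<and> (j, Suc i) \<in> young n lam \<longrightarrow> T j i < T j (Suc i))"

definition rd_le :: "nat \<times> nat \<Rightarrow> nat \<times> nat \<Rightarrow> bool" where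
  "rd_le p q \<longleftrightarrow> fst p < fst q \<or> (fst p = fst q \<and> snd p \<ge> snd q)"

definition rd_less :: "nat \<times> nat \<Rightarrow> nat \<times> nat \<Rightarrow> bool" where
  "rd_less p q \<longleftrightarrow> rd_le p q \<and> p \<noteq> q"

fun ewis_ge :: "nat \<Rightarrow> ('a \<times> nat) list \<Rightarrow> 'a list" where
  "ewis_ge x [] = []"
| "ewis_ge x ((a, y) # rest) = (if x \<le> y then a # ewis_ge y rest else ewis_ge x rest)"

fun ewis :: "('a \<times> nat) list \<Rightarrow> 'a list" where
  "ewis [] = []"
| "ewis ((a, x) # rest) = a # ewis_ge x rest"

definition lowest :: "(nat \<times> nat) set \<Rightarrow> nat \<Rightarrow> nat" where
  "lowest S j = Max {i. (j, i) \<in> S}"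

definition scan_seq :: "(nat \<Rightarrow> nat \<Rightarrow> nat) \<Rightarrow> nat \<Rightarrow> nat \<Rightarrow> (nat \<times> nat) set
    \<Rightarrow> ((nat \<times> nat) \<times> nat) list" where
  "scan_seq T lam1 l S =
     map (\<lambda>j. ((j, lowest S j), T j (lowest S j)))
         (filter (\<lambda>j. \<exists>i. (j, i) \<in> S) [l..<Suc lam1])"

definition scan_step :: "(nat \<Rightarrow> nat \<Rightarrow> nat) \<Rightarrow> nat \<Rightarrow> nat \<Rightarrow> (nat \<times> nat) set
    \<Rightarrow> (nat \<times> nat) set" where
  "scan_step T lam1 l S = set (ewis (scan_seq T lam1 l S))"

text \<open>Union of the first m computed scanning paths P(T;l,c_l), ..., P(T;l,c_l-m+1).\<close>
fun scan_removed :: "nat \<Rightarrow> (nat \<Rightarrow> nat) \<Rightarrow> (nat \<Rightarrow> nat \<Rightarrow> nat) \<Rightarrow> nat \<Rightarrow> nat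
    \<Rightarrow> (nat \<times> nat) set" where
  "scan_removed n lam T l 0 = {}"
| "scan_removed n lam T l (Suc m) =
     scan_removed n lam T l m \<union> scan_step T (lam 1) l (young n lam - scan_removed n lam T l m)"

definition scan_path :: "nat \<Rightarrow> (nat \<Rightarrow> nat) \<Rightarrow> (nat \<Rightarrow> nat \<Rightarrow> nat) \<Rightarrow> nat \<Rightarrow> nat
    \<Rightarrow> (nat \<times> nat) set" where
  "scan_path n lam T l k =
     scan_step T (lam 1) l (young n lam - scan_removed n lam T l (col_len n lam l - k))"

definition most_recent_loc :: "(nat \<times> nat) set \<Rightarrow> nat \<times> nat \<Rightarrow> nat \<times> nat" where
  "most_recent_loc P x = (THE p. p \<in> P \<and> rd_less p x \<and> (\<forall>q\<in>P. rd_less q x \<longrightarrow> rd_le q p))"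

definition most_recent_val :: "(nat \<Rightarrow> nat \<Rightarrow> nat) \<Rightarrow> (nat \<times> nat) set \<Rightarrow> nat \<times> nat \<Rightarrow> nat" where
  "most_recent_val T P x = (case most_recent_loc P x of (a, b) \<Rightarrow> T a b)"

end

theory Submission
  imports Defs
begin

text \<open>After the first m scanning paths of column l have been removed, the columns l, l+1, \<dots>
  still form a shape, with heights h_m; the next path consists of the lowest boxes (j, h_m j)
  whose entries are weak records of the sequence of lowest entries.  Relative to a box (j, i)
  with l < j, the most recent value of that path is therefore either the entry of its lowest
  box in column j, if this box lies below row i, or else the running maximum M_m(j) of the
  lowest entries in columns l, \<dots>, j-1.  Strictness of the columns shows that M_m(j) strictly
  decreases in m, that the paths removed before the one through (j, i) have most recent values
  exceeding T j i, and that the path through (j, i) has most recent value M_m(j) \<le> T j i.\<close>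

lemma set_ewis_ge_map:
  assumes "sorted_wrt (<) (js :: 'b::linorder list)"
  shows "set (ewis_ge x (map (\<lambda>j. (f j, g j)) js)) =
         f ` {j \<in> set js. x \<le> g j \<and> (\<forall>j'\<in>set js. j' < j \<longrightarrow> g j' \<le> g j)}"
  using assms
proof (induction js arbitrary: x)
  case Nil
  then show ?case by simp
next
  case (Cons a js)
  then have IH: "\<And>y. set (ewis_ge y (map (\<lambda>j. (f j, g j)) js)) =
      f ` {j \<in> set js. y \<le> g j \<and> (\<forall>j'\<in>set js. j' < j \<longrightarrow> g j' \<le> g j)}"
    and a_less: "\<And>y. y \<in> set js \<Longrightarrow> a < y" by auto
  show ?case
  proof (cases "x \<le> g a")
    case True
    then have "{j \<in> set (a # js). x \<le> g j \<and> (\<forall>j'\<in>set (a # js). j' < j \<longrightarrow> g j' \<le> g j)} =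
        insert a {j \<in> set js. g a \<le> g j \<and> (\<forall>j'\<in>set js. j' < j \<longrightarrow> g j' \<le> g j)}"
      using a_less by (auto dest: order.asym intro: order.trans)
    then show ?thesis using True by (simp add: IH)
  next
    case False
    then have "{j \<in> set (a # js). x \<le> g j \<and> (\<forall>j'\<in>set (a # js). j' < j \<longrightarrow> g j' \<le> g j)} =
        {j \<in> set js. x \<le> g j \<and> (\<forall>j'\<in>set js. j' < j \<longrightarrow> g j' \<le> g j)}"
      using a_less by auto
    then show ?thesis using False by (simp add: IH)
  qed
qed

lemma set_ewis_map:
  assumes "sorted_wrt (<) (js :: 'b::linorder list)"
  shows "set (ewis (map (\<lambda>j. (f j, g j)) js)) =
         f ` {j \<in> set js. \<forall>j'\<in>set js. j' < j \<longrightarrow> g j' \<le> g j}"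
proof (cases js)
  case Nil
  then show ?thesis by simp
next
  case (Cons a js')
  then have sorted: "sorted_wrt (<) js'" and a_less: "\<And>y. y \<in> set js' \<Longrightarrow> a < y"
    using assms by auto
  have "{j \<in> set js. \<forall>j'\<in>set js. j' < j \<longrightarrow> g j' \<le> g j} =
      insert a {j \<in> set js'. g a \<le> g j \<and> (\<forall>j'\<in>set js'. j' < j \<longrightarrow> g j' \<le> g j)}"
    using Cons a_less by (auto dest: order.asym)
  then show ?thesis using Cons by (simp add: set_ewis_ge_map[OF sorted])
qed

lemma down_closed_eq_atLeastAtMost_card:
  assumes "finite A" "\<And>i. i \<in> A \<Longrightarrow> 1 \<le> (i::nat)" "\<And>i i'. i \<in> A \<Longrightarrow> 1 \<le> i' \<Longrightarrow> i' \<le> i \<Longrightarrow> i' \<in> A"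
  shows "A = {1..card A}"
proof (cases "A = {}")
  case True
  then show ?thesis by simp
next
  case False
  then have "Max A \<in> A" using assms(1) by simp
  then have "{1..Max A} \<subseteq> A" using assms(3) by auto
  moreover have "A \<subseteq> {1..Max A}" using assms(1,2) by auto
  ultimately show ?thesis by (metis card_atLeastAtMost diff_Suc_1 subset_antisym)
qed

lemma exists_step_below:
  fixes f :: "nat \<Rightarrow> nat"
  assumes "i \<le> f 0" "f N < i"
  shows "\<exists>m<N. i \<le> f m \<and> f (Suc m) < i"
  using assms(2)
proof (induction N)
  case 0
  then show ?case using assms(1) by simp
next
  case (Suc N)
  then show ?case by (cases "f N < i") (auto intro: less_SucI)
qed

lemma rd_le_antisym: "rd_le p q \<Longrightarrow> rd_le q p \<Longrightarrow> p = q"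
  unfolding rd_le_def by (cases p; cases q) auto

lemma most_recent_loc_eqI:
  assumes "p \<in> P" "rd_less p x" "\<And>q. q \<in> P \<Longrightarrow> rd_less q x \<Longrightarrow> rd_le q p"
  shows "most_recent_loc P x = p"
  unfolding most_recent_loc_def
  by (rule the_equality) (use assms rd_le_antisym in blast)+

section \<open>Records of the lowest entries\<close>

text \<open>A shape restricted to the columns l, l+1, \<dots> is encoded by its column heights h, with
  h j = 0 for an empty column; (j, h j) is then the lowest box of column j.\<close>

definition is_record :: "(nat \<Rightarrow> nat \<Rightarrow> nat) \<Rightarrow> nat \<Rightarrow> (nat \<Rightarrow> nat) \<Rightarrow> nat \<Rightarrow> bool" where
  "is_record T l h j \<longleftrightarrow> l \<le> j \<and> 0 < h j \<and>
      (\<forall>j'. l \<le> j' \<and> j' < j \<and> 0 < h j' \<longrightarrow> T j' (h j') \<le> T j (h j))"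

definition record_path :: "(nat \<Rightarrow> nat \<Rightarrow> nat) \<Rightarrow> nat \<Rightarrow> (nat \<Rightarrow> nat) \<Rightarrow> (nat \<times> nat) set" where
  "record_path T l h = {(j, h j) | j. is_record T l h j}"

definition running_max :: "(nat \<Rightarrow> nat \<Rightarrow> nat) \<Rightarrow> nat \<Rightarrow> (nat \<Rightarrow> nat) \<Rightarrow> nat \<Rightarrow> nat" where
  "running_max T l h j = Max {T j' (h j') | j'. l \<le> j' \<and> j' < j \<and> 0 < h j'}"

lemma mem_record_path_iff: "(a, b) \<in> record_path T l h \<longleftrightarrow> is_record T l h a \<and> b = h a"
  unfolding record_path_def by auto

lemma scan_step_eq_record_path:
  assumes shape: "\<And>j i. l \<le> j \<Longrightarrow> (j, i) \<in> S \<longleftrightarrow> 1 \<le> i \<and> i \<le> h j"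
    and empty: "\<And>j. L < j \<Longrightarrow> h j = 0"
  shows "scan_step T L l S = record_path T l h"
proof -
  let ?js = "filter (\<lambda>j. 0 < h j) [l..<Suc L]"
  have nonempty_cols: "filter (\<lambda>j. \<exists>i. (j, i) \<in> S) [l..<Suc L] = ?js"
    using shape by (intro filter_cong) (auto intro: exI[of _ 1])
  have lowest: "lowest S j = h j" if "j \<in> set ?js" for j
  proof -
    have "{i. (j, i) \<in> S} = {1..h j}" using that shape by auto
    then show ?thesis using that unfolding lowest_def by (auto intro: Max_eqI)
  qed
  have seq: "scan_seq T L l S = map (\<lambda>j. ((j, h j), T j (h j))) ?js"
    unfolding scan_seq_def nonempty_cols by (auto simp: lowest)
  have sorted: "sorted_wrt (<) ?js" by (intro sorted_wrt_filter sorted_wrt_upt)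
  have "scan_step T L l S =
      (\<lambda>j. (j, h j)) ` {j \<in> set ?js. \<forall>j'\<in>set ?js. j' < j \<longrightarrow> T j' (h j') \<le> T j (h j)}"
    unfolding scan_step_def seq set_ewis_map[OF sorted] by (rule refl)
  also have "set ?js = {j. l \<le> j \<and> 0 < h j}"
  proof -
    have below: "j \<le> L" if "0 < h j" for j using that empty[of j] by linarith
    then show ?thesis by (auto simp: less_Suc_eq_le dest: below)
  qed
  also have "(\<lambda>j. (j, h j)) ` {j \<in> {j. l \<le> j \<and> 0 < h j}.
      \<forall>j'\<in>{j. l \<le> j \<and> 0 < h j}. j' < j \<longrightarrow> T j' (h j') \<le> T j (h j)} = record_path T l h"
    unfolding record_path_def is_record_def by auto
  finally show ?thesis .
qed

lemma running_max_finite: "finite {T j' (h j') | j'. l \<le> j' \<and> j' < (j::nat) \<and> 0 < h j'}"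
  by (rule finite_subset[of _ "(\<lambda>j'. T j' (h j')) ` {..<j}"]) auto

lemma running_max_ge: "l \<le> j' \<Longrightarrow> j' < j \<Longrightarrow> 0 < h j' \<Longrightarrow> T j' (h j') \<le> running_max T l h j"
  unfolding running_max_def by (rule Max_ge[OF running_max_finite]) blast

lemma running_max_attained:
  assumes "l < j" "0 < h l"
  obtains j0 where "l \<le> j0" "j0 < j" "0 < h j0" "running_max T l h j = T j0 (h j0)"
proof -
  have "{T j' (h j') | j'. l \<le> j' \<and> j' < j \<and> 0 < h j'} \<noteq> {}" using assms by blast
  then have "running_max T l h j \<in> {T j' (h j') | j'. l \<le> j' \<and> j' < j \<and> 0 < h j'}"
    unfolding running_max_def by (rule Max_in[OF running_max_finite])
  then show ?thesis using that by blast
qed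

lemma running_max_le_record:
  assumes "is_record T l h j" "l < j" "0 < h l"
  shows "running_max T l h j \<le> T j (h j)"
  using assms unfolding is_record_def by (metis running_max_attained)

lemma last_record_before:
  assumes "l < j" "0 < h l"
  obtains j0 where "is_record T l h j0" "j0 < j" "T j0 (h j0) = running_max T l h j"
    "\<And>a. is_record T l h a \<Longrightarrow> a < j \<Longrightarrow> a \<le> j0"
proof -
  define J where "J = {j'. l \<le> j' \<and> j' < j \<and> 0 < h j' \<and> T j' (h j') = running_max T l h j}"
  define j0 where "j0 = Max J"
  have "finite J" unfolding J_def by (rule finite_subset[of _ "{..<j}"]) auto
  moreover obtain j1 where "l \<le> j1" "j1 < j" "0 < h j1" "running_max T l h j = T j1 (h j1)"
    using running_max_attained[of l j h T] assms by blast
  then have "j1 \<in> J" unfolding J_def by simp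
  then have "J \<noteq> {}" by blast
  ultimately have "j0 \<in> J" and j0_max: "\<And>a. a \<in> J \<Longrightarrow> a \<le> j0"
    unfolding j0_def by simp_all
  then have j0: "l \<le> j0" "j0 < j" "0 < h j0" "T j0 (h j0) = running_max T l h j"
    unfolding J_def by simp_all
  have "is_record T l h j0"
    unfolding is_record_def using j0 by (auto intro: running_max_ge)
  moreover have "a \<le> j0" if a: "is_record T l h a" "a < j" for a
  proof (rule ccontr)
    assume "\<not> a \<le> j0"
    then have "T j0 (h j0) \<le> T a (h a)" using a(1) j0 unfolding is_record_def by (auto simp: not_le)
    moreover have "T a (h a) \<le> running_max T l h j"
      using a unfolding is_record_def by (simp add: running_max_ge)
    ultimately have "a \<in> J" using a j0(4) unfolding J_def is_record_def by simp
    then show False using j0_max \<open>\<not> a \<le> j0\<close> by blast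
  qed
  ultimately show ?thesis using that j0 by blast
qed

lemma most_recent_val_record_below:
  assumes "is_record T l h j" "i < h j"
  shows "most_recent_val T (record_path T l h) (j, i) = T j (h j)"
proof -
  have "most_recent_loc (record_path T l h) (j, i) = (j, h j)"
  proof (rule most_recent_loc_eqI)
    fix q assume "q \<in> record_path T l h" "rd_less q (j, i)"
    then show "rd_le q (j, h j)"
      unfolding record_path_def rd_less_def rd_le_def by auto
  qed (use assms in \<open>auto simp: mem_record_path_iff rd_less_def rd_le_def\<close>)
  then show ?thesis unfolding most_recent_val_def by simp
qed

lemma most_recent_val_running_max:
  assumes "l < j" "0 < h l" and not_below: "\<not> (is_record T l h j \<and> i < h j)"
  shows "most_recent_val T (record_path T l h) (j, i) = running_max T l h j"
proof -
  obtain j0 where j0: "is_record T l h j0" "j0 < j" "T j0 (h j0) = running_max T l h j"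
    and last: "\<And>a. is_record T l h a \<Longrightarrow> a < j \<Longrightarrow> a \<le> j0"
    using last_record_before[of l j h T] assms(1,2) by blast
  have "most_recent_loc (record_path T l h) (j, i) = (j0, h j0)"
  proof (rule most_recent_loc_eqI)
    fix q assume q: "q \<in> record_path T l h" "rd_less q (j, i)"
    then obtain a where a: "q = (a, h a)" "is_record T l h a" unfolding record_path_def by blast
    with q(2) not_below have "a < j" unfolding rd_less_def rd_le_def by auto
    then show "rd_le q (j0, h j0)" using last a unfolding rd_le_def by fastforce
  qed (use j0 in \<open>auto simp: mem_record_path_iff rd_less_def rd_le_def\<close>)
  then show ?thesis unfolding most_recent_val_def using j0(3) by simp
qed

section \<open>Scanning a semistandard tableau\<close>

text \<open>Heights of the columns l, l+1, \<dots> after the first m scanning paths have been removed.\<close>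

primrec scan_height :: "nat \<Rightarrow> (nat \<Rightarrow> nat) \<Rightarrow> (nat \<Rightarrow> nat \<Rightarrow> nat) \<Rightarrow> nat \<Rightarrow> nat \<Rightarrow> nat \<Rightarrow> nat" where
  "scan_height n lam T l 0 = col_len n lam"
| "scan_height n lam T l (Suc m) = (\<lambda>j. if is_record T l (scan_height n lam T l m) j
       then scan_height n lam T l m j - 1 else scan_height n lam T l m j)"

locale tableau_scanning =
  fixes n :: nat and lam :: "nat \<Rightarrow> nat" and T :: "nat \<Rightarrow> nat \<Rightarrow> nat" and l :: nat
  assumes partition: "is_partition n lam" and semistandard: "semistandard n lam T"
    and l_pos: "1 \<le> l"
begin

abbreviation "Y \<equiv> young n lam"
abbreviation "c \<equiv> col_len n lam"
abbreviation "L \<equiv> lam 1"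
abbreviation "H \<equiv> scan_height n lam T l"

lemma lam_antimono: "1 \<le> i \<Longrightarrow> i \<le> i' \<Longrightarrow> i' \<le> n \<Longrightarrow> lam i' \<le> lam i"
  using partition unfolding is_partition_def by blast

lemma mem_young_iff: "1 \<le> j \<Longrightarrow> (j, i) \<in> Y \<longleftrightarrow> 1 \<le> i \<and> i \<le> c j"
proof -
  assume "1 \<le> j"
  let ?A = "{i \<in> {1..n}. j \<le> lam i}"
  have "?A = {1..c j}"
    unfolding col_len_def
    by (rule down_closed_eq_atLeastAtMost_card) (auto intro: order.trans[OF _ lam_antimono])
  then have "i \<in> ?A \<longleftrightarrow> 1 \<le> i \<and> i \<le> c j" by simp
  then show ?thesis using \<open>1 \<le> j\<close> unfolding young_def by auto
qed

lemma col_len_eq_0: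
  assumes "L < j"
  shows "c j = 0"
proof -
  have "{i \<in> {1..n}. j \<le> lam i} = {}" using assms lam_antimono[of 1] by fastforce
  then show ?thesis unfolding col_len_def by simp
qed

lemma col_len_Suc_le: "c (Suc j) \<le> c j"
  unfolding col_len_def by (rule card_mono) auto

lemma entry_mono_row: "(j, i) \<in> Y \<Longrightarrow> (Suc j, i) \<in> Y \<Longrightarrow> T j i \<le> T (Suc j) i"
  using semistandard unfolding semistandard_def by blast

lemma entry_strict_mono_col:
  assumes "(j, i) \<in> Y" "(j, i') \<in> Y" "i < i'"
  shows "T j i < T j i'"
proof -
  have j: "1 \<le> j" and i: "1 \<le> i" using assms(1) unfolding young_def by auto
  have col_step: "T j r < T j (Suc r)" if "1 \<le> r" "r < c j" for r
    using that semistandard mem_young_iff[OF j] unfolding semistandard_def by auto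
  have "T j i < T j i''" if "Suc i \<le> i''" "i'' \<le> c j" for i''
    using that
  proof (induction i'' rule: dec_induct)
    case base
    then show ?case using col_step i by simp
  next
    case (step k)
    then show ?case using col_step[of k] i by fastforce
  qed
  then show ?thesis using assms(2,3) mem_young_iff[OF j] by simp
qed

lemma scan_height_antimono: "m1 \<le> m2 \<Longrightarrow> H m2 j \<le> H m1 j"
  by (induction m2 rule: dec_induct) (auto intro: le_trans)

lemma scan_height_le_col_len: "H m j \<le> c j"
  using scan_height_antimono[of 0 m] by simp

lemma scan_height_eq_0: "L < j \<Longrightarrow> H m j = 0"
  using scan_height_le_col_len col_len_eq_0 by (metis le_zero_eq)

lemma scan_height_start: "H m l = c l - m"
  by (induction m) (auto simp: is_record_def)

lemma scan_height_Suc_col_le: "l \<le> j \<Longrightarrow> H m (Suc j) \<le> H m j"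
proof (induction m)
  case 0
  then show ?case using col_len_Suc_le by simp
next
  case (Suc m)
  consider "H m (Suc j) < H m j" | "H m (Suc j) = H m j" "\<not> is_record T l (H m) j"
    | "H m (Suc j) = H m j" "is_record T l (H m) j"
    using Suc by fastforce
  then show ?case
  proof cases
    case 3
    \<comment> \<open>equal heights: the row weakness of T makes column Suc j a record as well\<close>
    let ?h = "H m j"
    have j: "1 \<le> j" using Suc.prems l_pos by simp
    have "0 < ?h" using 3 unfolding is_record_def by blast
    then have "(j, ?h) \<in> Y" "(Suc j, ?h) \<in> Y"
      using 3 scan_height_le_col_len[of m j] scan_height_le_col_len[of m "Suc j"]
        mem_young_iff[OF j] mem_young_iff[of "Suc j"] by auto
    then have "T j ?h \<le> T (Suc j) ?h" by (rule entry_mono_row)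
    then have "is_record T l (H m) (Suc j)"
      using 3 Suc.prems unfolding is_record_def by (auto simp: less_Suc_eq intro: le_trans)
    then show ?thesis using 3 by simp
  qed auto
qed

lemma scan_height_all_removed: "l \<le> j \<Longrightarrow> H (c l) j = 0"
proof (induction j rule: dec_induct)
  case base
  then show ?case using scan_height_start by simp
next
  case (step k)
  then show ?case using scan_height_Suc_col_le[of k "c l"] by simp
qed

lemma young_diff_scan_removed:
  "l \<le> j \<Longrightarrow> (j, i) \<in> Y - scan_removed n lam T l m \<longleftrightarrow> 1 \<le> i \<and> i \<le> H m j"
proof (induction m arbitrary: j i)
  case 0
  then show ?case using mem_young_iff l_pos by auto
next
  case (Suc m)
  have "scan_step T L l (Y - scan_removed n lam T l m) = record_path T l (H m)"
    using Suc.IH by (intro scan_step_eq_record_path) (auto simp: scan_height_eq_0)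
  then have "Y - scan_removed n lam T l (Suc m) = (Y - scan_removed n lam T l m) - record_path T l (H m)"
    by auto
  then show ?case using Suc by (auto simp: mem_record_path_iff)
qed

lemma scan_path_eq_record_path: "scan_path n lam T l k = record_path T l (H (c l - k))"
  unfolding scan_path_def
  by (rule scan_step_eq_record_path[OF young_diff_scan_removed]) (simp_all add: scan_height_eq_0)

lemma running_max_Suc_less:
  assumes "Suc m < c l" "l < j"
  shows "running_max T l (H (Suc m)) j < running_max T l (H m) j"
proof -
  have "0 < H (Suc m) l" using scan_height_start assms(1) by simp
  then obtain j0 where j0: "l \<le> j0" "j0 < j" "0 < H (Suc m) j0"
    "running_max T l (H (Suc m)) j = T j0 (H (Suc m) j0)"
    using running_max_attained[of l j "H (Suc m)" T] assms(2) by blast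
  have j0_pos: "1 \<le> j0" using j0 l_pos by simp
  show ?thesis
  proof (cases "is_record T l (H m) j0")
    case True
    \<comment> \<open>the lowest box of column j0 was removed; the one above it holds a smaller entry\<close>
    then have removed: "H (Suc m) j0 = H m j0 - 1" by (simp only: scan_height.simps if_True)
    have "(j0, H (Suc m) j0) \<in> Y" "(j0, H m j0) \<in> Y"
      unfolding mem_young_iff[OF j0_pos] using j0(3) removed scan_height_le_col_len[of m j0]
      by linarith+
    then have "T j0 (H (Suc m) j0) < T j0 (H m j0)"
      using j0(3) removed by (intro entry_strict_mono_col) (simp_all del: scan_height.simps)
    moreover have "T j0 (H m j0) \<le> running_max T l (H m) j"
      using j0 removed by (intro running_max_ge) (simp_all del: scan_height.simps)
    ultimately show ?thesis using j0(4) by linarith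
  next
    case False
    then have kept: "H (Suc m) j0 = H m j0" by (simp only: scan_height.simps if_False)
    with False j0 obtain j' where j': "l \<le> j'" "j' < j0" "0 < H m j'" "T j0 (H m j0) < T j' (H m j')"
      unfolding is_record_def by auto
    moreover have "T j' (H m j') \<le> running_max T l (H m) j"
      using j' j0 by (intro running_max_ge) simp_all
    ultimately show ?thesis using j0(4) kept by (simp del: scan_height.simps)
  qed
qed

lemma running_max_strict_antimono:
  assumes "m < m'" "m' < c l" "l < j"
  shows "running_max T l (H m') j < running_max T l (H m) j"
proof -
  from assms(1) have "Suc m \<le> m'" by simp
  then show ?thesis using assms(2)
  proof (induction m' rule: dec_induct)
    case base
    then show ?case using running_max_Suc_less[of m j] assms(3) by blast
  next
    case (step k)
    then show ?case using running_max_Suc_less[of k j] assms(3) by (meson Suc_lessD order.strict_trans)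
  qed
qed

lemma record_path_through_box:
  assumes "(j, i) \<in> Y" "l < j"
  obtains m where "m < c l" "is_record T l (H m) j" "H m j = i"
proof -
  have "1 \<le> j" using assms(2) l_pos by simp
  then have i: "1 \<le> i" "i \<le> H 0 j" using assms(1) mem_young_iff by auto
  moreover have "H (c l) j < i" using scan_height_all_removed[of j] assms(2) i(1) by simp
  ultimately obtain m where m: "m < c l" "i \<le> H m j" "H (Suc m) j < i"
    using exists_step_below[of i "\<lambda>m. H m j" "c l"] by blast
  then have "is_record T l (H m) j" by (metis not_le scan_height.simps(2))
  moreover from this have "H m j = i" using m by simp
  ultimately show ?thesis using that m(1) by blast
qed

lemma most_recent_val_own_path:
  assumes "l < j" "m < c l" "is_record T l (H m) j" "H m j = i"
  shows "most_recent_val T (record_path T l (H m)) (j, i) = running_max T l (H m) j"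
    and "running_max T l (H m) j \<le> T j i"
proof -
  have "0 < H m l" using assms(2) scan_height_start by simp
  then show "most_recent_val T (record_path T l (H m)) (j, i) = running_max T l (H m) j"
    using assms by (intro most_recent_val_running_max) simp_all
  show "running_max T l (H m) j \<le> T j i"
    using running_max_le_record[OF assms(3,1) \<open>0 < H m l\<close>] assms(4) by simp
qed

text \<open>A path removed before the one through (j, i) still occupies column j at height at least i,
  and its entry there, or an earlier larger entry, exceeds T j i.\<close>

lemma most_recent_val_earlier_path_gt:
  assumes "(j, i) \<in> Y" "l < j" "m < c l" "is_record T l (H m) j" "H m j = i" "m' < m"
  shows "T j i < most_recent_val T (record_path T l (H m')) (j, i)"
proof -
  have j: "1 \<le> j" using assms(2) l_pos by simp
  have i: "1 \<le> i" using assms(1) mem_young_iff[OF j] by simp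
  have above: "i \<le> H m' j" using scan_height_antimono[of m' m j] assms(5,6) by simp
  then have box: "(j, H m' j) \<in> Y" using i scan_height_le_col_len[of m' j] mem_young_iff[OF j] by simp
  have col: "T j i \<le> T j (H m' j)"
    using above entry_strict_mono_col[OF assms(1) box] by (cases "i = H m' j") simp_all
  show ?thesis
  proof (cases "is_record T l (H m') j \<and> i < H m' j")
    case True
    then show ?thesis
      using most_recent_val_record_below entry_strict_mono_col[OF assms(1) box] by simp
  next
    case False
    have "\<not> is_record T l (H m') j"
    proof
      assume "is_record T l (H m') j"
      then have "H (Suc m') j = i - 1" using False above by simp
      moreover have "H m j \<le> H (Suc m') j"
        using scan_height_antimono[of "Suc m'" m j] assms(6) by (simp del: scan_height.simps)
      ultimately show False using assms(5) i by simp
    qed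
    then obtain j' where j': "l \<le> j'" "j' < j" "0 < H m' j'" "T j (H m' j) < T j' (H m' j')"
      using assms(2) above i unfolding is_record_def by auto
    have "0 < H m' l" using assms(3,6) scan_height_start by simp
    then have "most_recent_val T (record_path T l (H m')) (j, i) = running_max T l (H m') j"
      using assms(2) False by (intro most_recent_val_running_max)
    moreover have "T j' (H m' j') \<le> running_max T l (H m') j" using j' by (intro running_max_ge)
    ultimately show ?thesis using col j'(4) by linarith
  qed
qed

lemma most_recent_val_later_path_less:
  assumes "l < j" "m < c l" "is_record T l (H m) j" "H m j = i" "m < m'" "m' < c l"
  shows "most_recent_val T (record_path T l (H m')) (j, i) <
    most_recent_val T (record_path T l (H m)) (j, i)"
proof -
  have "H m' j \<le> H (Suc m) j"
    using scan_height_antimono[of "Suc m" m' j] assms(5) by (simp del: scan_height.simps)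
  moreover have "H (Suc m) j = i - 1" using assms(3,4) by simp
  moreover have "0 < i" using assms(3,4) unfolding is_record_def by simp
  ultimately have "H m' j < i" by linarith
  moreover have "0 < H m' l" using assms(6) scan_height_start by simp
  ultimately have "most_recent_val T (record_path T l (H m')) (j, i) = running_max T l (H m') j"
    using assms(1) by (intro most_recent_val_running_max) simp_all
  then show ?thesis
    using most_recent_val_own_path(1)[OF assms(1-4)] running_max_strict_antimono[OF assms(5,6,1)]
    by simp
qed

lemma exists_scan_path_through:
  assumes "(j, i) \<in> Y" "l < j"
  shows "\<exists>k\<in>{1..c l}. (j, i) \<in> scan_path n lam T l k"
proof -
  obtain m where m: "m < c l" "is_record T l (H m) j" "H m j = i"
    using record_path_through_box[OF assms] .
  then have "(j, i) \<in> scan_path n lam T l (c l - m)"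
    by (simp add: scan_path_eq_record_path mem_record_path_iff)
  then show ?thesis using m(1) by force
qed

lemma most_recent_val_scan_path_through:
  assumes "(j, i) \<in> Y" "l < j" "k \<in> {1..c l}" "(j, i) \<in> scan_path n lam T l k"
  shows "most_recent_val T (scan_path n lam T l k) (j, i) =
    Max {most_recent_val T (scan_path n lam T l k') (j, i) | k'.
      k' \<in> {1..c l} \<and> most_recent_val T (scan_path n lam T l k') (j, i) \<le> T j i}"
proof -
  define V where "V k' = most_recent_val T (scan_path n lam T l k') (j, i)" for k'
  define m where "m = c l - k"
  have m: "m < c l" "is_record T l (H m) j" "H m j = i"
    using assms(3,4) unfolding m_def by (auto simp: scan_path_eq_record_path mem_record_path_iff)
  have V: "V k' = most_recent_val T (record_path T l (H (c l - k'))) (j, i)" for k'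
    unfolding V_def scan_path_eq_record_path ..
  have "V k \<le> T j i" using most_recent_val_own_path[OF assms(2) m] V unfolding m_def by simp
  moreover have "V k' \<le> V k" if "k' \<in> {1..c l}" "V k' \<le> T j i" for k'
  proof -
    have "c l - k' < c l" using that(1) by auto
    then consider "c l - k' < m" | "c l - k' = m" | "m < c l - k'" by linarith
    then show ?thesis
    proof cases
      case 1
      then show ?thesis using most_recent_val_earlier_path_gt[OF assms(1,2) m] V that(2) by fastforce
    next
      case 2
      then show ?thesis using V unfolding m_def by simp
    next
      case 3
      then show ?thesis
        using most_recent_val_later_path_less[OF assms(2) m 3 \<open>c l - k' < c l\<close>] V unfolding m_def
        by simp
    qed
  qed
  moreover have "finite {V k' | k'. k' \<in> {1..c l} \<and> V k' \<le> T j i}"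
    by (rule finite_subset[of _ "V ` {1..c l}"]) auto
  ultimately show ?thesis
    unfolding V_def[symmetric] using assms(3) by (intro Max_eqI[symmetric]) auto
qed

end

theorem lemma3p2:
  fixes n :: nat and lam :: "nat \<Rightarrow> nat" and T :: "nat \<Rightarrow> nat \<Rightarrow> nat" and l j i :: nat
  assumes "0 < n"
    and "is_partition n lam"
    and "semistandard n lam T"
    and "1 \<le> l" and "l < lam 1"
    and "(j, i) \<in> young n lam"
    and "rd_less (l, 1) (j, i)"
  shows "(\<exists>k\<in>{1..col_len n lam l}. (j, i) \<in> scan_path n lam T l k) \<and>
         (\<forall>k\<in>{1..col_len n lam l}. (j, i) \<in> scan_path n lam T l k \<longrightarrow>
            most_recent_val T (scan_path n lam T l k) (j, i) =
            Max {most_recent_val T (scan_path n lam T l k') (j, i) | k'.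
                   k' \<in> {1..col_len n lam l} \<and>
                   most_recent_val T (scan_path n lam T l k') (j, i) \<le> T j i})"
proof -
  interpret tableau_scanning n lam T l
    using assms(2-4) by unfold_locales
  have "1 \<le> i" using assms(6) unfolding young_def by simp
  then have "l < j" using assms(7) unfolding rd_less_def rd_le_def by auto
  then show ?thesis
    using exists_scan_path_through most_recent_val_scan_path_through assms(6) by blast
qed

end
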